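(* Let $0<p<1/2$ and let $\mathcal E_p$ be the qubit channel mapping every input state $\varrho$ to the fixed state $\xi_p=p|0\rangle\langle 0|+(1-p)|1\rangle\langle 1|$. Then the boundariness of $\mathcal E_p$ in the convex set of qubit channels is $b(\mathcal E_p)=p(1-p)$, and this is strictly larger than the minimal eigenvalue $\lambda_{\min}=p/2$ of the Choi–Jamiolkowski operator $E_p=\xi_p\otimes\tfrac12 I$ of $\mathcal E_p$.
   Context: A qubit channel is a completely positive trace-preserving linear map on $2\times 2$ complex matrices; the set of qubit channels is convex. The Choi–Jamiolkowski operator of a channel $\mathcal E$ is $E=(\mathcal E\otimes\mathcal I)(|\psi_+\rangle\langle\psi_+|)$ with $|\psi_+\rangle=\frac1{\sqrt2}(|00\rangle+|11\rangle)$. For a convex set $Z$ and $x,y\in Z$, the weight function is $t_y(x)=\sup\{0\leq t<1 : \frac{y-tx}{1-t}\in Z\}$, and the boundariness of $y$ is $b(y)=\inf_{x\in Z}t_y(x)$. *)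

theory Defs
  imports Complex_Main "Jordan_Normal_Form.Char_Poly"
begin

text \<open>Qubit operators are 2x2 complex matrices (JNF type complex mat, carrier 2x2).
A linear map on qubit operators is a function on complex mat; only its values on the
2x2 carrier matter.\<close>

definition qop :: "complex mat set" where
  "qop = carrier_mat 2 2"

definition mtrace :: "complex mat \<Rightarrow> complex" where
  "mtrace A = (\<Sum>i<dim_row A. A $$ (i,i))"

definition psd :: "complex mat \<Rightarrow> bool" where
  "psd M \<longleftrightarrow> (\<exists>n. M \<in> carrier_mat n n \<and>
     (\<forall>v \<in> carrier_vec n.
        (\<Sum>i<n. \<Sum>j<n. cnj (v $ i) * M $$ (i,j) * v $ j) \<in> \<real> \<and>
        0 \<le> Re (\<Sum>i<n. \<Sum>j<n. cnj (v $ i) * M $$ (i,j) * v $ j)))"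

text \<open>Ampliation E \<otimes> id_n acting on (2n)x(2n) matrices, index of |a>|c> being n*a+c
(a<2 qubit index, c<n ancilla index).\<close>
definition ampl :: "nat \<Rightarrow> (complex mat \<Rightarrow> complex mat) \<Rightarrow> complex mat \<Rightarrow> complex mat" where
  "ampl n E X = mat (2*n) (2*n) (\<lambda>(i,j).
      E (mat 2 2 (\<lambda>(a',b'). X $$ (n*a' + i mod n, n*b' + j mod n))) $$ (i div n, j div n))"

definition qubit_channel :: "(complex mat \<Rightarrow> complex mat) \<Rightarrow> bool" where
  "qubit_channel E \<longleftrightarrow>
     (\<forall>A \<in> qop. E A \<in> qop) \<and>
     (\<forall>A \<in> qop. \<forall>B \<in> qop. \<forall>c::complex. E (c \<cdot>\<^sub>m A + B) = c \<cdot>\<^sub>m E A + E B) \<and>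
     (\<forall>n>0. \<forall>X \<in> carrier_mat (2*n) (2*n). psd X \<longrightarrow> psd (ampl n E X)) \<and>
     (\<forall>A \<in> qop. mtrace (E A) = mtrace A)"

definition qubit_channels :: "(complex mat \<Rightarrow> complex mat) set" where
  "qubit_channels = {E. qubit_channel E}"

text \<open>Weight function and boundariness in the convex set Z of maps on qubit operators
(pointwise affine combinations of maps; the values off the 2x2 carrier are irrelevant
to membership in the set of qubit channels).\<close>
definition weight :: "(complex mat \<Rightarrow> complex mat) set \<Rightarrow> (complex mat \<Rightarrow> complex mat)
     \<Rightarrow> (complex mat \<Rightarrow> complex mat) \<Rightarrow> real" where
  "weight Z y x = Sup {t. 0 \<le> t \<and> t < 1 \<and>
      (\<lambda>A. complex_of_real (1 / (1 - t)) \<cdot>\<^sub>m (y A - complex_of_real t \<cdot>\<^sub>m x A)) \<in> Z}"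

definition boundariness :: "(complex mat \<Rightarrow> complex mat) set \<Rightarrow> (complex mat \<Rightarrow> complex mat) \<Rightarrow> real" where
  "boundariness Z y = Inf (weight Z y ` Z)"

text \<open>|psi+><psi+| with psi+ = (|00>+|11>)/sqrt 2, basis index of |a>|c> is 2a+c.\<close>
definition psi_plus_proj :: "complex mat" where
  "psi_plus_proj = mat 4 4 (\<lambda>(i,j). if i div 2 = i mod 2 \<and> j div 2 = j mod 2 then 1/2 else 0)"

definition choi :: "(complex mat \<Rightarrow> complex mat) \<Rightarrow> complex mat" where
  "choi E = ampl 2 E psi_plus_proj"

definition kron :: "complex mat \<Rightarrow> complex mat \<Rightarrow> complex mat" where
  "kron A B = mat (dim_row A * dim_row B) (dim_col A * dim_col B)
     (\<lambda>(i,j). A $$ (i div dim_row B, j div dim_col B) * B $$ (i mod dim_row B, j mod dim_col B))"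

definition xi :: "real \<Rightarrow> complex mat" where
  "xi p = mat 2 2 (\<lambda>(i,j). if i = 0 \<and> j = 0 then complex_of_real p
                          else if i = 1 \<and> j = 1 then complex_of_real (1 - p) else 0)"

text \<open>The replacement channel: linear extension of rho \<mapsto> xi_p, i.e. A \<mapsto> tr(A) xi_p.\<close>
definition repl_channel :: "real \<Rightarrow> complex mat \<Rightarrow> complex mat" where
  "repl_channel p A = mtrace A \<cdot>\<^sub>m xi p"

end

theory Submission
  imports Defs
begin

text \<open>Split a state X of a qubit and an n-dimensional ancilla into 2x2 blocks and let Y be its
partial trace over the qubit. For any channel x, the quadratic form of (x \<otimes> id)(X) at a vector
f = (g, h) is at most (sqrt (g* Y g) + sqrt (h* Y h))^2, by the Cauchy-Schwarz inequality between
its diagonal blocks and trace preservation; the replacement channel gives exactly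
p (g* Y g) + (1 - p) (h* Y h). Since t (a + b)^2 \<le> p a^2 + (1 - p) b^2 whenever t \<le> p (1 - p), the
map (E_p - t x) / (1 - t) is a channel for every channel x and every t \<le> p (1 - p). For the
identity channel and t > p (1 - p), the Choi operator of (E_p - t id) / (1 - t) is negative at
(1 - p)|00> + p|11>. The Choi operator of E_p is diagonal with entries p/2 and (1 - p)/2.\<close>

definition quad_form :: "complex mat \<Rightarrow> (nat \<Rightarrow> complex) \<Rightarrow> complex" where
  "quad_form M f = (\<Sum>i<dim_row M. \<Sum>j<dim_row M. cnj (f i) * M $$ (i, j) * f j)"

definition block_form ::
    "complex mat \<Rightarrow> nat \<Rightarrow> nat \<Rightarrow> nat \<Rightarrow> (nat \<Rightarrow> complex) \<Rightarrow> (nat \<Rightarrow> complex) \<Rightarrow> complex" where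
  "block_form M r s n g h = (\<Sum>i<n. \<Sum>j<n. cnj (g i) * M $$ (r + i, s + j) * h j)"

lemma quad_form_eq_block_form: "M \<in> carrier_mat n n \<Longrightarrow> quad_form M g = block_form M 0 0 n g g"
  by (simp add: quad_form_def block_form_def)

lemma psd_iff_quad_form:
  assumes "M \<in> carrier_mat m m"
  shows "psd M \<longleftrightarrow> (\<forall>f. quad_form M f \<in> \<real> \<and> 0 \<le> Re (quad_form M f))"
proof
  assume "psd M"
  then have psd: "(\<Sum>i<m. \<Sum>j<m. cnj (v $ i) * M $$ (i, j) * v $ j) \<in> \<real> \<and>
      0 \<le> Re (\<Sum>i<m. \<Sum>j<m. cnj (v $ i) * M $$ (i, j) * v $ j)" if "v \<in> carrier_vec m" for v
    using assms that unfolding psd_def by auto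
  show "\<forall>f. quad_form M f \<in> \<real> \<and> 0 \<le> Re (quad_form M f)"
  proof
    fix f
    have "quad_form M f = (\<Sum>i<m. \<Sum>j<m. cnj (vec m f $ i) * M $$ (i, j) * vec m f $ j)"
      using assms unfolding quad_form_def by (auto intro!: sum.cong)
    then show "quad_form M f \<in> \<real> \<and> 0 \<le> Re (quad_form M f)"
      using psd[of "vec m f"] by simp
  qed
next
  assume "\<forall>f. quad_form M f \<in> \<real> \<and> 0 \<le> Re (quad_form M f)"
  then show "psd M"
    using assms unfolding psd_def quad_form_def by fastforce
qed

lemma sum_lessThan_double:
  "(\<Sum>i<2 * n. F i) = (\<Sum>i<n. F i) + (\<Sum>i<n. F (n + i :: nat) :: 'a :: comm_monoid_add)"
proof -
  have "(\<Sum>i<2 * n. F i) = sum F {0..<n} + sum F {n..<n + n}"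
    by (simp add: lessThan_atLeast0 mult_2 sum.atLeastLessThan_concat)
  also have "sum F {n..<n + n} = (\<Sum>i<n. F (n + i))"
    using sum.shift_bounds_nat_ivl[of F 0 n n] by (simp add: lessThan_atLeast0 add.commute)
  finally show ?thesis by (simp add: lessThan_atLeast0)
qed

lemma quad_form_split_blocks:
  assumes "M \<in> carrier_mat (2 * n) (2 * n)"
  shows "quad_form M (\<lambda>i. if i < n then g i else h (i - n)) =
    block_form M 0 0 n g g + block_form M 0 n n g h + block_form M n 0 n h g + block_form M n n n h h"
  using assms unfolding quad_form_def block_form_def
  by (simp only: carrier_matD sum_lessThan_double) (simp add: sum.distrib)

lemma split_fun: "(\<lambda>i. if i < n then f i else f (n + (i - n))) = (f :: nat \<Rightarrow> 'a)"
  by (simp add: fun_eq_iff)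

lemma block_form_scale:
  "block_form M r s n (\<lambda>i. of_real a * g i) (\<lambda>j. of_real b * h j) = of_real (a * b) * block_form M r s n g h"
  by (simp add: block_form_def sum_distrib_left mult_ac)

lemma quadratic_nonneg_discriminant:
  fixes a b c :: real
  assumes nonneg: "\<And>r. 0 \<le> a + r * b + r\<^sup>2 * c" and "0 \<le> a" "0 \<le> c"
  shows "b \<le> 2 * sqrt a * sqrt c"
proof (cases "c = 0")
  case True
  have "b = 0"
  proof (rule ccontr)
    assume "b \<noteq> 0"
    with True nonneg[of "- (a + 1) / b"] show False by (simp add: field_simps)
  qed
  with assms show ?thesis by simp
next
  case False
  with assms have c: "c > 0" by simp
  from nonneg[of "- b / (2 * c)"] c have "b\<^sup>2 \<le> 4 * a * c"
    by (simp add: field_simps power2_eq_square)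
  then have "sqrt (b\<^sup>2) \<le> sqrt (4 * a * c)" by (rule real_sqrt_le_mono)
  with assms show ?thesis by (simp add: real_sqrt_mult)
qed

lemma psd_block_cauchy_schwarz:
  assumes "psd M" "M \<in> carrier_mat (2 * n) (2 * n)"
  shows "block_form M 0 0 n g g \<in> \<real>" "0 \<le> Re (block_form M 0 0 n g g)"
    and "block_form M n n n h h \<in> \<real>" "0 \<le> Re (block_form M n n n h h)"
    and "Re (quad_form M (\<lambda>i. if i < n then g i else h (i - n)))
           \<le> (sqrt (Re (block_form M 0 0 n g g)) + sqrt (Re (block_form M n n n h h)))\<^sup>2"
proof -
  let ?A = "block_form M 0 0 n g g" and ?C = "block_form M n n n h h"
  let ?B = "block_form M 0 n n g h + block_form M n 0 n h g"
  define P where "P a b = quad_form M (\<lambda>i. if i < n then of_real a * g i else of_real b * h (i - n))"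
    for a b
  have P_eq: "P a b = of_real (a\<^sup>2) * ?A + of_real (a * b) * ?B + of_real (b\<^sup>2) * ?C" for a b
    using quad_form_split_blocks[OF assms(2), of "\<lambda>i. of_real a * g i" "\<lambda>i. of_real b * h i"]
    by (simp add: P_def block_form_scale power2_eq_square algebra_simps)
  have P_nonneg: "P a b \<in> \<real> \<and> 0 \<le> Re (P a b)" for a b
    using assms unfolding P_def psd_iff_quad_form[OF assms(2)] by blast
  from P_nonneg[of 1 0] show A: "?A \<in> \<real>" "0 \<le> Re ?A" by (simp_all add: P_eq)
  from P_nonneg[of 0 1] show C: "?C \<in> \<real>" "0 \<le> Re ?C" by (simp_all add: P_eq)
  have "Re ?B \<le> 2 * sqrt (Re ?A) * sqrt (Re ?C)"
  proof (rule quadratic_nonneg_discriminant)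
    show "0 \<le> Re ?A + r * Re ?B + r\<^sup>2 * Re ?C" for r
      using P_nonneg[of 1 r] by (simp add: P_eq)
  qed (use A C in auto)
  moreover have "Re (quad_form M (\<lambda>i. if i < n then g i else h (i - n))) = Re ?A + Re ?B + Re ?C"
    using P_eq[of 1 1] by (simp only: P_def of_real_1 mult_1) simp
  moreover have "(sqrt (Re ?A) + sqrt (Re ?C))\<^sup>2 = Re ?A + 2 * sqrt (Re ?A) * sqrt (Re ?C) + Re ?C"
    using A C by (simp add: power2_eq_square algebra_simps)
  ultimately show "Re (quad_form M (\<lambda>i. if i < n then g i else h (i - n))) \<le> (sqrt (Re ?A) + sqrt (Re ?C))\<^sup>2"
    by linarith
qed

(* Traces out the qubit, which carries the high-order digit of the index n * a + c used by ampl. *)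
definition partial_trace :: "nat \<Rightarrow> complex mat \<Rightarrow> complex mat" where
  "partial_trace n X = mat n n (\<lambda>(c, d). X $$ (c, d) + X $$ (n + c, n + d))"

lemma partial_trace_carrier [simp]: "partial_trace n X \<in> carrier_mat n n"
  by (simp add: partial_trace_def)

lemma quad_form_partial_trace:
  "quad_form (partial_trace n X) g = block_form X 0 0 n g g + block_form X n n n g g"
  unfolding quad_form_def block_form_def partial_trace_def
  by (simp add: sum.distrib[symmetric] algebra_simps)

lemma psd_partial_trace:
  assumes "psd X" "X \<in> carrier_mat (2 * n) (2 * n)"
  shows "psd (partial_trace n X)"
  unfolding psd_iff_quad_form[OF partial_trace_carrier] quad_form_partial_trace
  using psd_block_cauchy_schwarz(1-4)[OF assms] by auto

definition qubit_block :: "nat \<Rightarrow> complex mat \<Rightarrow> nat \<Rightarrow> nat \<Rightarrow> complex mat" where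
  "qubit_block n X c d = mat 2 2 (\<lambda>(a, b). X $$ (n * a + c, n * b + d))"

lemma qubit_block_qop [simp]: "qubit_block n X c d \<in> qop"
  by (simp add: qubit_block_def qop_def)

lemma dim_ampl [simp]: "dim_row (ampl n E X) = 2 * n" "dim_col (ampl n E X) = 2 * n"
  by (simp_all add: ampl_def)

lemma ampl_carrier [simp]: "ampl n E X \<in> carrier_mat (2 * n) (2 * n)"
  by (simp add: carrier_matI)

lemma ampl_index:
  assumes "i < 2 * n" "j < 2 * n"
  shows "ampl n E X $$ (i, j) = E (qubit_block n X (i mod n) (j mod n)) $$ (i div n, j div n)"
  using assms by (simp add: ampl_def qubit_block_def)

lemma mtrace_2x2: "A \<in> carrier_mat 2 2 \<Longrightarrow> mtrace A = A $$ (0, 0) + A $$ (1, 1)"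
  by (simp add: mtrace_def numeral_2_eq_2 lessThan_Suc)

lemma mtrace_smult_minus:
  assumes "A \<in> carrier_mat 2 2" "B \<in> carrier_mat 2 2"
  shows "mtrace (c \<cdot>\<^sub>m (A - d \<cdot>\<^sub>m B)) = c * (mtrace A - d * mtrace B)"
  using assms by (simp add: mtrace_def numeral_2_eq_2 lessThan_Suc algebra_simps)

lemma mtrace_qubit_block: "mtrace (qubit_block n X c d) = X $$ (c, d) + X $$ (n + c, n + d)"
  by (simp add: mtrace_2x2 qubit_block_def)

lemma partial_trace_ampl:
  assumes "\<forall>A \<in> qop. E A \<in> qop" "\<forall>A \<in> qop. mtrace (E A) = mtrace A"
  shows "partial_trace n (ampl n E X) = partial_trace n X"
proof (rule eq_matI)
  fix c d assume "c < dim_row (partial_trace n X)" "d < dim_col (partial_trace n X)"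
  then have cd: "c < n" "d < n" by (simp_all add: partial_trace_def)
  let ?B = "qubit_block n X c d"
  have "E ?B \<in> carrier_mat 2 2" using assms(1) qubit_block_qop unfolding qop_def by blast
  then have "E ?B $$ (0, 0) + E ?B $$ (1, 1) = mtrace (E ?B)"
    by (rule mtrace_2x2[symmetric])
  also have "\<dots> = X $$ (c, d) + X $$ (n + c, n + d)"
    using assms(2) by (simp add: mtrace_qubit_block)
  finally have "E ?B $$ (0, 0) + E ?B $$ (1, 1) = X $$ (c, d) + X $$ (n + c, n + d)" .
  with cd show "partial_trace n (ampl n E X) $$ (c, d) = partial_trace n X $$ (c, d)"
    by (simp add: partial_trace_def ampl_index)
qed (simp_all add: partial_trace_def)

lemma kron_index:
  assumes "A \<in> carrier_mat k k" "B \<in> carrier_mat m m" "a < k" "b < k" "i < m" "j < m"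
  shows "kron A B $$ (m * a + i, m * b + j) = A $$ (a, b) * B $$ (i, j)"
proof -
  have "m * a' + i' < k * m" if "a' < k" "i' < m" for a' i'
  proof -
    have "m * a' + i' < m * Suc a'" using that by simp
    also have "\<dots> \<le> m * k" using that by (intro mult_le_mono2) simp
    finally show ?thesis by (simp add: mult.commute)
  qed
  with assms show ?thesis by (simp add: kron_def)
qed

lemma block_form_kron:
  assumes "A \<in> carrier_mat k k" "B \<in> carrier_mat m m" "a < k" "b < k"
  shows "block_form (kron A B) (m * a) (m * b) m g h = A $$ (a, b) * block_form B 0 0 m g h"
  unfolding block_form_def sum_distrib_left
  by (intro sum.cong refl) (simp add: kron_index[OF assms] mult.left_commute)

lemma xi_carrier [simp]: "xi p \<in> carrier_mat 2 2"
  by (simp add: xi_def)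

lemma kron_xi_carrier [simp]: "P \<in> carrier_mat n n \<Longrightarrow> kron (xi p) P \<in> carrier_mat (2 * n) (2 * n)"
  by (simp add: kron_def xi_def)

lemma quad_form_kron_xi:
  assumes "P \<in> carrier_mat n n"
  shows "quad_form (kron (xi p) P) f = of_real p * quad_form P f + of_real (1 - p) * quad_form P (\<lambda>i. f (n + i))"
proof -
  have block: "block_form (kron (xi p) P) (n * a) (n * b) n g h = xi p $$ (a, b) * block_form P 0 0 n g h"
    if "a < 2" "b < 2" for a b g h
    using block_form_kron[OF xi_carrier assms that] .
  show ?thesis
    using quad_form_split_blocks[OF kron_xi_carrier[OF assms], where g = f and h = "\<lambda>i. f (n + i)"]
      block[of 0 0] block[of 0 1] block[of 1 0] block[of 1 1]
    by (simp add: split_fun quad_form_eq_block_form[OF assms] xi_def)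
qed

lemma psd_kron_xi:
  assumes "0 \<le> p" "p \<le> 1" "psd P"
  shows "psd (kron (xi p) P)"
proof -
  obtain n where P: "P \<in> carrier_mat n n" using assms(3) unfolding psd_def by blast
  show ?thesis
    using assms P unfolding psd_iff_quad_form[OF kron_xi_carrier[OF P]] psd_iff_quad_form[OF P]
    by (auto simp: quad_form_kron_xi[OF P] elim!: Reals_cases)
qed

lemma ampl_repl_channel:
  "ampl n (repl_channel p) X = kron (xi p) (partial_trace n X)"
proof (rule eq_matI)
  fix i j assume "i < dim_row (kron (xi p) (partial_trace n X))" "j < dim_col (kron (xi p) (partial_trace n X))"
  then have ij: "i < 2 * n" "j < 2 * n" by (simp_all add: kron_def xi_def partial_trace_def)
  then have "n > 0" by simp
  with ij show "ampl n (repl_channel p) X $$ (i, j) = kron (xi p) (partial_trace n X) $$ (i, j)"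
    by (simp add: ampl_index kron_def partial_trace_def repl_channel_def mtrace_qubit_block
        less_mult_imp_div_less mult.commute carrier_matD[OF xi_carrier])
qed (simp_all add: ampl_def kron_def xi_def partial_trace_def)

lemma qubit_channel_repl_channel:
  assumes "0 \<le> p" "p \<le> 1"
  shows "qubit_channel (repl_channel p)"
  unfolding qubit_channel_def
proof (intro conjI ballI allI impI)
  fix A assume "A \<in> qop"
  show "repl_channel p A \<in> qop" by (simp add: repl_channel_def qop_def)
  show "mtrace (repl_channel p A) = mtrace A"
    by (simp add: repl_channel_def mtrace_2x2 xi_def algebra_simps)
next
  fix A B c assume "A \<in> qop" "B \<in> qop"
  then have "mtrace (c \<cdot>\<^sub>m A + B) = c * mtrace A + mtrace B"
    by (simp add: qop_def mtrace_2x2 algebra_simps)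
  then show "repl_channel p (c \<cdot>\<^sub>m A + B) = c \<cdot>\<^sub>m repl_channel p A + repl_channel p B"
    unfolding repl_channel_def by (intro eq_matI) (simp_all add: xi_def algebra_simps)
next
  fix n :: nat and X assume "0 < n" "X \<in> carrier_mat (2 * n) (2 * n)" "psd X"
  then show "psd (ampl n (repl_channel p) X)"
    unfolding ampl_repl_channel using assms by (intro psd_kron_xi psd_partial_trace)
qed

lemma partial_trace_psi_plus_proj: "partial_trace 2 psi_plus_proj = (1/2 :: complex) \<cdot>\<^sub>m 1\<^sub>m 2"
  by (rule eq_matI) (auto simp: partial_trace_def psi_plus_proj_def less_2_cases_iff)

lemma choi_repl_channel: "choi (repl_channel p) = kron (xi p) ((1/2 :: complex) \<cdot>\<^sub>m 1\<^sub>m 2)"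
  by (simp add: choi_def ampl_repl_channel partial_trace_psi_plus_proj)

(* The map z with y = t x + (1 - t) z, whose membership in Z defines the weight function. *)
definition extrapolate ::
    "real \<Rightarrow> (complex mat \<Rightarrow> complex mat) \<Rightarrow> (complex mat \<Rightarrow> complex mat) \<Rightarrow> complex mat \<Rightarrow> complex mat" where
  "extrapolate t y x = (\<lambda>A. complex_of_real (1 / (1 - t)) \<cdot>\<^sub>m (y A - complex_of_real t \<cdot>\<^sub>m x A))"

lemma weight_eq_Sup_extrapolate: "weight Z y x = Sup {t. 0 \<le> t \<and> t < 1 \<and> extrapolate t y x \<in> Z}"
  unfolding weight_def extrapolate_def ..

lemma boundariness_eqI:
  assumes "0 \<le> b" "b < 1"
    and inside: "\<And>x. x \<in> Z \<Longrightarrow> extrapolate b y x \<in> Z"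
    and "x\<^sub>0 \<in> Z" and outside: "\<And>t. b < t \<Longrightarrow> t < 1 \<Longrightarrow> extrapolate t y x\<^sub>0 \<notin> Z"
  shows "boundariness Z y = b"
proof -
  let ?S = "\<lambda>x. {t. 0 \<le> t \<and> t < 1 \<and> extrapolate t y x \<in> Z}"
  have bdd: "bdd_above (?S x)" for x by (rule bdd_aboveI[of _ 1]) auto
  have weight_ge: "b \<le> weight Z y x" if "x \<in> Z" for x
    unfolding weight_eq_Sup_extrapolate using assms inside[OF that] by (intro cSup_upper[OF _ bdd]) auto
  have "weight Z y x\<^sub>0 \<le> b"
    unfolding weight_eq_Sup_extrapolate
  proof (rule cSup_least)
    show "?S x\<^sub>0 \<noteq> {}" using assms inside[OF \<open>x\<^sub>0 \<in> Z\<close>] by blast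
  qed (use outside in force)
  then have "weight Z y x\<^sub>0 = b" using weight_ge[OF \<open>x\<^sub>0 \<in> Z\<close>] by simp
  moreover have "bdd_below (weight Z y ` Z)" using weight_ge by (intro bdd_belowI[of _ b]) auto
  ultimately have "boundariness Z y \<le> b"
    unfolding boundariness_def using \<open>x\<^sub>0 \<in> Z\<close> by (metis cInf_lower imageI)
  moreover have "b \<le> boundariness Z y"
    unfolding boundariness_def using \<open>x\<^sub>0 \<in> Z\<close> weight_ge by (intro cInf_greatest) auto
  ultimately show ?thesis by simp
qed

lemma ampl_extrapolate:
  assumes "\<forall>A \<in> qop. y A \<in> qop" "\<forall>A \<in> qop. x A \<in> qop"
  shows "ampl n (extrapolate t y x) X =
    complex_of_real (1 / (1 - t)) \<cdot>\<^sub>m (ampl n y X - complex_of_real t \<cdot>\<^sub>m ampl n x X)"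
    (is "_ = ?R")
proof (rule eq_matI)
  fix i j assume "i < dim_row ?R" "j < dim_col ?R"
  then have ij: "i < 2 * n" "j < 2 * n" by simp_all
  then have "i div n < 2" "j div n < 2" by (simp_all add: less_mult_imp_div_less)
  moreover have "y (qubit_block n X (i mod n) (j mod n)) \<in> carrier_mat 2 2"
    "x (qubit_block n X (i mod n) (j mod n)) \<in> carrier_mat 2 2"
    using assms qubit_block_qop unfolding qop_def by blast+
  ultimately show "ampl n (extrapolate t y x) X $$ (i, j) = ?R $$ (i, j)"
    using ij by (simp add: ampl_index extrapolate_def)
qed simp_all

lemma qubit_channel_extrapolate_iff:
  assumes y: "qubit_channel y" and x: "qubit_channel x" and "t < 1"
  shows "qubit_channel (extrapolate t y x) \<longleftrightarrow>
    (\<forall>n>0. \<forall>X \<in> carrier_mat (2 * n) (2 * n). psd X \<longrightarrow>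
       psd (complex_of_real (1 / (1 - t)) \<cdot>\<^sub>m (ampl n y X - complex_of_real t \<cdot>\<^sub>m ampl n x X)))"
proof -
  have closed: "\<forall>A \<in> qop. y A \<in> qop" "\<forall>A \<in> qop. x A \<in> qop"
    using x y unfolding qubit_channel_def by auto
  have "extrapolate t y x A \<in> qop" if "A \<in> qop" for A
    using closed that unfolding extrapolate_def qop_def by (auto intro!: smult_carrier_mat minus_carrier_mat)
  moreover have "extrapolate t y x (c \<cdot>\<^sub>m A + B) = c \<cdot>\<^sub>m extrapolate t y x A + extrapolate t y x B"
    if "A \<in> qop" "B \<in> qop" for A B c
  proof -
    have "y A \<in> carrier_mat 2 2" "y B \<in> carrier_mat 2 2" "x A \<in> carrier_mat 2 2" "x B \<in> carrier_mat 2 2"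
      using closed that unfolding qop_def by auto
    moreover have "y (c \<cdot>\<^sub>m A + B) = c \<cdot>\<^sub>m y A + y B" "x (c \<cdot>\<^sub>m A + B) = c \<cdot>\<^sub>m x A + x B"
      using x y that unfolding qubit_channel_def by auto
    ultimately show ?thesis
      unfolding extrapolate_def by (intro eq_matI) (simp_all add: algebra_simps)
  qed
  moreover have "mtrace (extrapolate t y x A) = mtrace A" if "A \<in> qop" for A
  proof -
    have "y A \<in> carrier_mat 2 2" "x A \<in> carrier_mat 2 2"
      using closed that unfolding qop_def by auto
    moreover have "mtrace (y A) = mtrace A" "mtrace (x A) = mtrace A"
      using x y that unfolding qubit_channel_def by auto
    ultimately have "mtrace (extrapolate t y x A) = complex_of_real (1 / (1 - t)) * complex_of_real (1 - t) * mtrace A"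
      unfolding extrapolate_def
      by (simp only: mtrace_smult_minus of_real_diff of_real_1 mult.assoc left_diff_distrib mult_1_left)
    also have "\<dots> = mtrace A" using \<open>t < 1\<close> by (simp flip: of_real_mult)
    finally show ?thesis .
  qed
  ultimately show ?thesis
    unfolding qubit_channel_def[of "extrapolate t y x"] ampl_extrapolate[OF closed] by blast
qed

lemma quad_form_smult_minus:
  assumes "A \<in> carrier_mat m m" "B \<in> carrier_mat m m"
  shows "quad_form (c \<cdot>\<^sub>m (A - d \<cdot>\<^sub>m B)) f = c * (quad_form A f - d * quad_form B f)"
proof -
  have "quad_form (c \<cdot>\<^sub>m (A - d \<cdot>\<^sub>m B)) f =
      (\<Sum>i<m. \<Sum>j<m. c * (cnj (f i) * A $$ (i, j) * f j) - c * d * (cnj (f i) * B $$ (i, j) * f j))"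
    using assms unfolding quad_form_def by (auto intro!: sum.cong simp: algebra_simps)
  then show ?thesis
    using assms unfolding quad_form_def by (simp add: sum_subtractf sum_distrib_left algebra_simps)
qed

lemma quad_form_ampl_le:
  assumes x: "qubit_channel x" and X: "psd X" "X \<in> carrier_mat (2 * n) (2 * n)" and "0 < n"
  shows "quad_form (ampl n x X) f \<in> \<real>"
    and "Re (quad_form (ampl n x X) f) \<le>
      (sqrt (Re (quad_form (partial_trace n X) f)) + sqrt (Re (quad_form (partial_trace n X) (\<lambda>i. f (n + i)))))\<^sup>2"
proof -
  let ?M = "ampl n x X" and ?h = "\<lambda>i. f (n + i)"
  have M: "psd ?M" using x X \<open>0 < n\<close> unfolding qubit_channel_def by blast
  then show "quad_form ?M f \<in> \<real>" using psd_iff_quad_form[OF ampl_carrier] by blast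
  have trace: "partial_trace n ?M = partial_trace n X"
    using x unfolding qubit_channel_def by (intro partial_trace_ampl) auto
  note blocks = psd_block_cauchy_schwarz[OF M ampl_carrier]
  have "Re (block_form ?M 0 0 n f f) \<le> Re (quad_form (partial_trace n X) f)"
    using blocks(4)[of f] unfolding trace[symmetric] quad_form_partial_trace by simp
  moreover have "Re (block_form ?M n n n ?h ?h) \<le> Re (quad_form (partial_trace n X) ?h)"
    using blocks(2)[of ?h] unfolding trace[symmetric] quad_form_partial_trace by simp
  ultimately have "sqrt (Re (block_form ?M 0 0 n f f)) + sqrt (Re (block_form ?M n n n ?h ?h)) \<le>
      sqrt (Re (quad_form (partial_trace n X) f)) + sqrt (Re (quad_form (partial_trace n X) ?h))"
    by (intro add_mono real_sqrt_le_mono)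
  then have "(sqrt (Re (block_form ?M 0 0 n f f)) + sqrt (Re (block_form ?M n n n ?h ?h)))\<^sup>2 \<le>
      (sqrt (Re (quad_form (partial_trace n X) f)) + sqrt (Re (quad_form (partial_trace n X) ?h)))\<^sup>2"
    by (rule power_mono) (use blocks(2)[of f] blocks(4)[of ?h] in simp)
  with blocks(5)[of f ?h] show "Re (quad_form ?M f) \<le>
      (sqrt (Re (quad_form (partial_trace n X) f)) + sqrt (Re (quad_form (partial_trace n X) ?h)))\<^sup>2"
    by (simp add: split_fun)
qed

lemma scaled_sum_square_le:
  fixes p t a b :: real
  assumes "0 \<le> t" "t \<le> p * (1 - p)"
  shows "t * (a + b)\<^sup>2 \<le> p * a\<^sup>2 + (1 - p) * b\<^sup>2"
proof -
  have "t * (a + b)\<^sup>2 \<le> p * (1 - p) * (a + b)\<^sup>2" using assms by (intro mult_right_mono) simp_all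
  also have "\<dots> = p * a\<^sup>2 + (1 - p) * b\<^sup>2 - (p * a - (1 - p) * b)\<^sup>2"
    by (simp add: power2_eq_square algebra_simps)
  also have "\<dots> \<le> p * a\<^sup>2 + (1 - p) * b\<^sup>2" by simp
  finally show ?thesis .
qed

lemma qubit_channel_extrapolate_repl_channel:
  assumes p: "0 \<le> p" "p \<le> 1" and x: "qubit_channel x" and t: "0 \<le> t" "t \<le> p * (1 - p)"
  shows "qubit_channel (extrapolate t (repl_channel p) x)"
proof -
  have "0 \<le> (p - 1/2)\<^sup>2" by simp
  then have "p * (1 - p) \<le> 1/4" by (simp add: power2_eq_square algebra_simps)
  with t have "t < 1" by linarith
  show ?thesis
    unfolding qubit_channel_extrapolate_iff[OF qubit_channel_repl_channel[OF p] x \<open>t < 1\<close>]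
  proof (intro allI impI ballI)
    fix n :: nat and X assume "0 < n" "X \<in> carrier_mat (2 * n) (2 * n)" "psd X"
    let ?P = "partial_trace n X"
    let ?C = "complex_of_real (1 / (1 - t)) \<cdot>\<^sub>m (ampl n (repl_channel p) X - complex_of_real t \<cdot>\<^sub>m ampl n x X)"
    have C: "?C \<in> carrier_mat (2 * n) (2 * n)" by (intro smult_carrier_mat minus_carrier_mat ampl_carrier)
    show "psd ?C" unfolding psd_iff_quad_form[OF C]
    proof
      fix f :: "nat \<Rightarrow> complex"
      have P: "psd ?P" using \<open>psd X\<close> \<open>X \<in> carrier_mat (2 * n) (2 * n)\<close> by (rule psd_partial_trace)
      obtain A where A: "quad_form ?P f = of_real A" "0 \<le> A"
        using P unfolding psd_iff_quad_form[OF partial_trace_carrier] by (metis Reals_cases Re_complex_of_real)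
      obtain B where B: "quad_form ?P (\<lambda>i. f (n + i)) = of_real B" "0 \<le> B"
        using P unfolding psd_iff_quad_form[OF partial_trace_carrier] by (metis Reals_cases Re_complex_of_real)
      obtain q where q: "quad_form (ampl n x X) f = of_real q"
        using quad_form_ampl_le(1)[OF x \<open>psd X\<close> \<open>X \<in> carrier_mat (2 * n) (2 * n)\<close> \<open>0 < n\<close>]
        by (auto elim!: Reals_cases)
      have "q \<le> (sqrt A + sqrt B)\<^sup>2"
        using quad_form_ampl_le(2)[OF x \<open>psd X\<close> \<open>X \<in> carrier_mat (2 * n) (2 * n)\<close> \<open>0 < n\<close>, of f]
        unfolding A B q by simp
      then have "t * q \<le> t * (sqrt A + sqrt B)\<^sup>2" using t by (intro mult_left_mono)
      also have "\<dots> \<le> p * A + (1 - p) * B"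
        using scaled_sum_square_le[OF t, of "sqrt A" "sqrt B"] A B by simp
      finally have "0 \<le> 1 / (1 - t) * (p * A + (1 - p) * B - t * q)"
        using \<open>t < 1\<close> by simp
      moreover have "quad_form ?C f = of_real (1 / (1 - t) * (p * A + (1 - p) * B - t * q))"
        unfolding quad_form_smult_minus[OF ampl_carrier ampl_carrier]
        unfolding ampl_repl_channel quad_form_kron_xi[OF partial_trace_carrier] A B q by simp
      ultimately show "quad_form ?C f \<in> \<real> \<and> 0 \<le> Re (quad_form ?C f)"
        by simp
    qed
  qed
qed

lemma ampl_id: "X \<in> carrier_mat (2 * n) (2 * n) \<Longrightarrow> ampl n (\<lambda>A. A) X = X"
  by (intro eq_matI) (auto simp: ampl_index qubit_block_def less_mult_imp_div_less)

lemma qubit_channel_id: "qubit_channel (\<lambda>A. A)"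
  by (simp add: qubit_channel_def ampl_id)

lemma quad_form_psi_plus_proj: "quad_form psi_plus_proj g = of_real ((cmod (g 0 + g 3))\<^sup>2 / 2)"
proof -
  have "quad_form psi_plus_proj g = cnj (g 0 + g 3) * (g 0 + g 3) / 2"
    by (simp add: psi_plus_proj_def quad_form_def lessThan_nat_numeral) (simp add: algebra_simps)
  also have "\<dots> = of_real ((cmod (g 0 + g 3))\<^sup>2 / 2)"
    by (simp only: of_real_divide complex_norm_square of_real_numeral mult.commute)
  finally show ?thesis .
qed

lemma psi_plus_proj_carrier: "psi_plus_proj \<in> carrier_mat (2 * 2) (2 * 2)"
  by (simp add: psi_plus_proj_def)

lemma psd_psi_plus_proj: "psd psi_plus_proj"
  using psi_plus_proj_carrier by (rule psd_iff_quad_form[THEN iffD2]) (simp add: quad_form_psi_plus_proj)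

lemma not_qubit_channel_extrapolate_id:
  assumes p: "0 \<le> p" "p \<le> 1" and t: "p * (1 - p) < t" "t < 1"
  shows "\<not> qubit_channel (extrapolate t (repl_channel p) (\<lambda>A. A))"
proof
  let ?C = "complex_of_real (1 / (1 - t)) \<cdot>\<^sub>m (choi (repl_channel p) - complex_of_real t \<cdot>\<^sub>m psi_plus_proj)"
  assume "qubit_channel (extrapolate t (repl_channel p) (\<lambda>A. A))"
  then have "psd (complex_of_real (1 / (1 - t)) \<cdot>\<^sub>m
      (ampl 2 (repl_channel p) psi_plus_proj - complex_of_real t \<cdot>\<^sub>m ampl 2 (\<lambda>A. A) psi_plus_proj))"
    using psd_psi_plus_proj psi_plus_proj_carrier
    unfolding qubit_channel_extrapolate_iff[OF qubit_channel_repl_channel[OF p] qubit_channel_id \<open>t < 1\<close>]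
    by (metis pos2)
  then have psd: "psd ?C"
    unfolding choi_def ampl_id[OF psi_plus_proj_carrier] .
  \<comment> \<open>(1 - p)|00> + p|11>, the direction in which the Choi operator turns negative\<close>
  define f where "f i = (if i = 0 then complex_of_real (1 - p) else if i = 3 then complex_of_real p else 0)" for i :: nat
  have choi: "quad_form (choi (repl_channel p)) f = of_real (p * (1 - p) / 2)"
    unfolding choi_repl_channel quad_form_kron_xi[of "(1/2 :: complex) \<cdot>\<^sub>m 1\<^sub>m 2" 2, OF smult_carrier_mat[OF one_carrier_mat]]
    by (simp add: f_def quad_form_def lessThan_nat_numeral) (simp add: algebra_simps)
  have psi: "quad_form psi_plus_proj f = 1 / 2"
    by (simp add: quad_form_psi_plus_proj f_def)
  have carrier: "choi (repl_channel p) \<in> carrier_mat (2 * 2) (2 * 2)" "psi_plus_proj \<in> carrier_mat (2 * 2) (2 * 2)"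
    unfolding choi_def by (rule ampl_carrier psi_plus_proj_carrier)+
  have "?C \<in> carrier_mat (2 * 2) (2 * 2)" by (intro smult_carrier_mat minus_carrier_mat carrier(2))
  then have "0 \<le> Re (quad_form ?C f)" using psd psd_iff_quad_form by blast
  also have "\<dots> = (p * (1 - p) - t) / (2 * (1 - t))"
    unfolding quad_form_smult_minus[OF carrier] choi psi using t by (simp add: field_simps)
  also have "\<dots> < 0" using t by (intro divide_neg_pos) simp_all
  finally show False by simp
qed

lemma eigenvalue_upper_triangular_iff:
  fixes A :: "'a :: field mat"
  assumes "A \<in> carrier_mat n n" "upper_triangular A"
  shows "eigenvalue A k \<longleftrightarrow> k \<in> set (diag_mat A)"
  by (simp add: eigenvalue_root_char_poly[OF assms(1)] char_poly_upper_triangular[OF assms]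
      poly_prod_list prod_list_zero_iff image_iff)

lemma upper_triangular_kron:
  assumes "A \<in> carrier_mat k k" "B \<in> carrier_mat m m" "upper_triangular A" "upper_triangular B"
  shows "upper_triangular (kron A B)"
  unfolding upper_triangular_def
proof (intro allI impI)
  fix i j assume i: "i < dim_row (kron A B)" and "j < i"
  then have "i < k * m" using assms by (simp add: kron_def)
  then have "i div m < k" "0 < m" by (simp add: less_mult_imp_div_less, cases m, auto)
  have "j div m \<le> i div m" using \<open>j < i\<close> by (simp add: div_le_mono)
  then consider "j div m < i div m" | "j div m = i div m" "j mod m < i mod m"
    using \<open>j < i\<close> by (metis div_mult_mod_eq le_neq_implies_less nat_add_left_cancel_less nat_neq_iff)
  then have "A $$ (i div m, j div m) = 0 \<or> B $$ (i mod m, j mod m) = 0"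
  proof cases
    case 1
    then show ?thesis using assms(1,3) \<open>i div m < k\<close> unfolding upper_triangular_def by auto
  next
    case 2
    with \<open>0 < m\<close> have "i mod m < m" by simp
    with 2 show ?thesis using assms(2,4) unfolding upper_triangular_def by auto
  qed
  then show "kron A B $$ (i, j) = 0"
    using i \<open>j < i\<close> assms by (auto simp: kron_def)
qed

lemma eigenvalue_choi_repl_channel_iff:
  "eigenvalue (choi (repl_channel p)) k \<longleftrightarrow> k = complex_of_real (p / 2) \<or> k = complex_of_real ((1 - p) / 2)"
proof -
  let ?K = "kron (xi p) ((1/2 :: complex) \<cdot>\<^sub>m 1\<^sub>m 2)"
  have K: "?K \<in> carrier_mat (2 * 2) (2 * 2)" by (intro kron_xi_carrier smult_carrier_mat one_carrier_mat)
  have ut: "upper_triangular ?K"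
    by (rule upper_triangular_kron[OF xi_carrier smult_carrier_mat[OF one_carrier_mat]])
      (auto simp: upper_triangular_def xi_def less_2_cases_iff)
  have "set (diag_mat ?K) = {complex_of_real (p / 2), complex_of_real ((1 - p) / 2)}"
    by (simp add: diag_mat_def kron_def xi_def upt_conv_Cons insert_commute)
  then show ?thesis
    unfolding choi_repl_channel eigenvalue_upper_triangular_iff[OF K ut] by simp
qed

theorem proposition5:
  fixes p :: real
  assumes "0 < p" and "p < 1/2"
  shows "qubit_channel (repl_channel p)
       \<and> boundariness qubit_channels (repl_channel p) = p * (1 - p)
       \<and> choi (repl_channel p) = kron (xi p) ((1/2 :: complex) \<cdot>\<^sub>m 1\<^sub>m 2)
       \<and> eigenvalue (choi (repl_channel p)) (complex_of_real (p/2))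
       \<and> (\<forall>k. eigenvalue (choi (repl_channel p)) k \<longrightarrow> k \<in> \<real> \<and> p/2 \<le> Re k)
       \<and> p * (1 - p) > p / 2"
proof -
  have p: "0 \<le> p" "p \<le> 1" using assms by simp_all
  have "p * (1 - p) \<le> p" using assms by (intro mult_left_le) simp_all
  then have b: "0 \<le> p * (1 - p)" "p * (1 - p) < 1" using assms by (simp, linarith)
  have "boundariness qubit_channels (repl_channel p) = p * (1 - p)"
  proof (rule boundariness_eqI[OF b])
    show "extrapolate (p * (1 - p)) (repl_channel p) x \<in> qubit_channels" if "x \<in> qubit_channels" for x
      using qubit_channel_extrapolate_repl_channel[OF p _ b(1) order_refl] that by (simp add: qubit_channels_def)
    show "(\<lambda>A. A) \<in> qubit_channels" by (simp add: qubit_channels_def qubit_channel_id)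
    show "extrapolate t (repl_channel p) (\<lambda>A. A) \<notin> qubit_channels" if "p * (1 - p) < t" "t < 1" for t
      using not_qubit_channel_extrapolate_id[OF p that] by (simp add: qubit_channels_def)
  qed
  moreover have "p / 2 < p * (1 - p)"
    using mult_strict_left_mono[of p "1 - p" "1/2"] assms by simp
  moreover have "k \<in> \<real> \<and> p / 2 \<le> Re k" if "eigenvalue (choi (repl_channel p)) k" for k
    using that assms unfolding eigenvalue_choi_repl_channel_iff by (elim disjE; hypsubst) simp_all
  ultimately show ?thesis
    using qubit_channel_repl_channel[OF p] choi_repl_channel eigenvalue_choi_repl_channel_iff by blast
qed

end
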